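(* Let $p$ be an odd prime and let $q\in\mathbb{C}_p$ satisfy $|1-q|_p<p^{-1/(p-1)}$. Then for every integer $n\ge 0$, $\left|\frac{2}{[2]_q}E_{n,q}\right|_p\le 1$, i.e. $\frac{2}{[2]_q}E_{n,q}$ is a $p$-adic integer.
   Context: $\mathbb{C}_p$ is the completion of an algebraic closure of $\mathbb{Q}_p$, with absolute value $|\cdot|_p$ normalized by $|p|_p=1/p$. For $x\in\mathbb{Z}_p$ put $[x]_q=\frac{1-q^x}{1-q}$ and $[x]_{-q}=\frac{1-(-q)^x}{1+q}$. For a function $f$ on $\mathbb{Z}_p$ the fermionic $p$-adic $q$-integral is $\int_{\mathbb{Z}_p}f(x)\,d\mu_{-q}(x)=\lim_{N\to\infty}\frac{1}{[p^N]_{-q}}\sum_{x=0}^{p^N-1}f(x)(-q)^x$. The $q$-Euler numbers are $E_{n,q}=\int_{\mathbb{Z}_p}[x]_q^n q^{-x}\,d\mu_{-q}(x)$; equivalently $\frac{2}{[2]_q}E_{n,q}=\lim_{N\to\infty}\sum_{x=0}^{p^N-1}(-1)^x[x]_q^n$. *)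

theory Defs
  imports Complex_Main "HOL-Computational_Algebra.Polynomial"
begin

text \<open>The q-number [x]_q = (1 - q^x)/(1 - q), written as the geometric sum
  1 + q + ... + q^(x-1), which agrees with (1-q^x)/(1-q) for q \<noteq> 1 and
  gives the natural value x at q = 1.\<close>
definition q_int :: "'a::comm_ring_1 \<Rightarrow> nat \<Rightarrow> 'a" where
  "q_int q x = (\<Sum>i<x. q ^ i)"

text \<open>An absolute value v on a field K making K a complete, algebraically
  closed, non-archimedean valued field with |p| = 1/p (so the restriction to Q
  is the p-adic absolute value). C_p with its normalized absolute value is such
  a field.\<close>
definition cp_like_abs :: "nat \<Rightarrow> ('a::field_char_0 \<Rightarrow> real) \<Rightarrow> bool" where
  "cp_like_abs p v \<longleftrightarrow>
     (\<forall>x. 0 \<le> v x) \<and> (\<forall>x. v x = 0 \<longleftrightarrow> x = 0) \<and>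
     (\<forall>x y. v (x * y) = v x * v y) \<and>
     (\<forall>x y. v (x + y) \<le> max (v x) (v y)) \<and>
     v (of_nat p) = 1 / real p \<and>
     (\<forall>S :: nat \<Rightarrow> 'a. (\<forall>e>0. \<exists>M. \<forall>m\<ge>M. \<forall>n\<ge>M. v (S m - S n) < e)
         \<longrightarrow> (\<exists>L. (\<lambda>n. v (S n - L)) \<longlonglongrightarrow> 0)) \<and>
     (\<forall>P :: 'a poly. degree P > 0 \<longrightarrow> (\<exists>z. poly P z = 0))"

end

theory Submission
  imports Defs "HOL-Computational_Algebra.Primes"
begin

(* Integrality of the fermionic q-Euler numbers  2/[2]_q E_{n,q} = lim_N S(p^N),
   where S(m) = sum_{x<m} (-1)^x [x]_q^n.

   Let s = |q - 1| < 1 and c = max(1/p, s^(p-1)) < 1.  The proof rests on three estimates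
   in a non-archimedean field:
   (1) |[p]_r| <= c whenever |r - 1| <= s: expand [p]_{1+t} = sum_j C(p,j+1) t^j; every
       binomial coefficient except the last is divisible by p, the last term is t^(p-1);
       multiplicativity [p^(N+1)]_q = [p^N]_q [p]_{q^(p^N)} then gives |[p^N]_q| <= c^N.
   (2) For odd M and odd p, S(pM) - S(M) is a sum of terms +-([a+bM]_q^n - [a]_q^n), and
       [a+bM]_q - [a]_q = q^a [M]_q [b]_{q^M}, so |S(pM) - S(M)| <= |[M]_q|.
   (3) A sequence with |S(N+1) - S(N)| <= c^N is Cauchy in an ultrametric field, hence
       converges when the field is complete, and its limit is bounded by any bound of the terms.
   Combining (1) and (2) with M = p^N gives |S(p^(N+1)) - S(p^N)| <= c^N; then (3), with
   |S(m)| <= 1, yields the limit L and |L| <= 1. *)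


section \<open>Algebra of q-integers and index manipulations\<close>

lemma q_int_Suc: "q_int q (Suc k) = q_int q k + q ^ k"
  by (simp add: q_int_def)

lemma q_int_add: "q_int q (a + m) = q_int q a + q ^ a * q_int q m"
  by (induction m) (auto simp: q_int_Suc algebra_simps power_add q_int_def)

text \<open>Multiplicativity: [k m]_q = [m]_q [k]_{q^m}; this drives the estimate of [p^N]_q.\<close>
lemma q_int_mult: "q_int q (k * m) = q_int q m * q_int (q ^ m) k"
proof (induction k)
  case 0
  then show ?case by (simp add: q_int_def)
next
  case (Suc k)
  have "q_int q (Suc k * m) = q_int q (k * m) + q ^ (k * m) * q_int q m"
    by (metis add.commute mult_Suc q_int_add)
  then show ?case using Suc by (simp add: q_int_Suc algebra_simps flip: power_mult)
qed

lemma q_int_binomial: "q_int (1 + t) x = (\<Sum>j<x. of_nat (x choose Suc j) * t ^ j)"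
proof (induction x)
  case 0
  then show ?case by (simp add: q_int_def)
next
  case (Suc x)
  have binom: "(1 + t) ^ x = (\<Sum>j<Suc x. of_nat (x choose j) * t ^ j)"
    using binomial_ring[of t 1 x] by (simp add: atLeast0AtMost lessThan_Suc_atMost add.commute)
  have "(\<Sum>j<Suc x. of_nat (Suc x choose Suc j) * t ^ j)
      = (\<Sum>j<Suc x. of_nat (x choose j) * t ^ j) + (\<Sum>j<Suc x. of_nat (x choose Suc j) * t ^ j)"
    by (simp add: sum.distrib algebra_simps)
  also have "(\<Sum>j<Suc x. of_nat (x choose Suc j) * t ^ j) = (\<Sum>j<x. of_nat (x choose Suc j) * t ^ j)"
    by (simp add: binomial_eq_0)
  finally show ?case using Suc binom by (simp add: q_int_Suc)
qed

lemma sum_lessThan_add: "sum f {..<(k::nat) + m} = sum f {..<k} + (\<Sum>a<m. f (k + a))"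
  by (induction m) (auto simp: add.assoc)

lemma sum_lessThan_mult: "(\<Sum>x<(m::nat) * k. f x) = (\<Sum>b<k. \<Sum>a<m. f (a + b * m))"
proof (induction k)
  case 0
  then show ?case by simp
next
  case (Suc k)
  have "(\<Sum>x<m * k + m. f x) = (\<Sum>x<m * k. f x) + (\<Sum>a<m. f (m * k + a))"
    by (rule sum_lessThan_add)
  then show ?case using Suc by (simp add: add.commute mult.commute)
qed

lemma alternating_sum_odd: "odd p \<Longrightarrow> (\<Sum>b<p. (-1::'a::comm_ring_1) ^ b) = 1"
proof -
  assume "odd p"
  then obtain k where k: "p = Suc (2 * k)" by (metis oddE Suc_eq_plus1)
  have "(\<Sum>b<2 * k. (-1::'a) ^ b) = 0" for k :: nat by (induction k) auto
  then show ?thesis using k by simp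
qed

text \<open>The partial sums whose limit along m = p^N is 2/[2]_q E_{n,q}.\<close>
definition euler_partial_sum :: "'a::comm_ring_1 \<Rightarrow> nat \<Rightarrow> nat \<Rightarrow> 'a" where
  "euler_partial_sum q n m = (\<Sum>x<m. (-1) ^ x * q_int q x ^ n)"

text \<open>For odd M and odd p, passing from M to pM adds only differences of shifted terms:
  the p blocks of length M carry the signs of the first block, and the block signs sum to 1.\<close>
lemma euler_partial_sum_period:
  assumes "odd p" and "odd M"
  shows "euler_partial_sum q n (M * p) - euler_partial_sum q n M
       = (\<Sum>b<p. \<Sum>a<M. (-1) ^ (a + b * M) * (q_int q (a + b * M) ^ n - q_int q a ^ n))"
proof -
  define S where "S = euler_partial_sum q n"
  have sign: "(-1::'a) ^ (a + b * M) = (-1) ^ b * (-1) ^ a" for a b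
  proof -
    have "(-1::'a) ^ (a + b * M) = (-1) ^ a * ((-1) ^ M) ^ b"
      by (simp only: power_add power_mult mult.commute[of b M])
    then show ?thesis using \<open>odd M\<close> by (simp add: mult.commute)
  qed
  have long: "S (M * p) = (\<Sum>b<p. \<Sum>a<M. (-1) ^ (a + b * M) * q_int q (a + b * M) ^ n)"
    unfolding S_def euler_partial_sum_def by (rule sum_lessThan_mult)
  have "S M = (\<Sum>b<p. (-1::'a) ^ b) * S M"
    using alternating_sum_odd[OF \<open>odd p\<close>, where 'a='a] by simp
  also have "\<dots> = (\<Sum>b<p. \<Sum>a<M. (-1) ^ (a + b * M) * q_int q a ^ n)"
    by (simp add: S_def euler_partial_sum_def sign sum_distrib_left sum_distrib_right
        mult.assoc sum.swap[of _ "{..<p}"])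
  finally show ?thesis
    unfolding S_def[symmetric] long by (simp add: sum_subtractf algebra_simps)
qed


section \<open>Non-archimedean absolute values\<close>

locale nonarch_abs =
  fixes v :: "'a::field_char_0 \<Rightarrow> real"
  assumes nonneg: "\<And>x. 0 \<le> v x" and zero_iff: "\<And>x. v x = 0 \<longleftrightarrow> x = 0"
    and mult: "\<And>x y. v (x * y) = v x * v y"
    and ultra: "\<And>x y. v (x + y) \<le> max (v x) (v y)"
begin

lemma abs_one: "v 1 = 1"
proof -
  have "v 1 = v 1 * v 1" using mult[of 1 1] by simp
  moreover have "v 1 \<noteq> 0" using zero_iff by simp
  ultimately show ?thesis by (metis mult_cancel_left1)
qed

lemma abs_zero [simp]: "v 0 = 0"
  using zero_iff by simp

lemma abs_minus_one: "v (-1) = 1"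
proof -
  have "v (-1) * v (-1) = 1" using mult[of "-1" "-1"] abs_one by simp
  then show ?thesis using nonneg[of "-1"] by (auto simp add: square_eq_1_iff)
qed

lemma abs_minus: "v (- x) = v x"
  using mult[of "-1" x] abs_minus_one by simp

lemma abs_diff_commute: "v (x - y) = v (y - x)"
  by (metis minus_diff_eq abs_minus)

lemma abs_diff_le: "v (x - y) \<le> max (v x) (v y)"
  using ultra[of x "-y"] abs_minus[of y] by simp

lemma abs_power: "v (x ^ n) = v x ^ n"
  by (induction n) (auto simp: abs_one mult)

lemma abs_sign: "v ((-1) ^ x) = 1"
  by (simp add: abs_power abs_minus_one)

lemma abs_sum_le:
  "finite (A :: 'b set) \<Longrightarrow> 0 \<le> B \<Longrightarrow> (\<And>x. x \<in> A \<Longrightarrow> v (f x) \<le> B) \<Longrightarrow> v (sum f A) \<le> B"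
proof (induction A rule: finite_induct)
  case empty
  then show ?case by simp
next
  case (insert a A)
  have "v (f a) \<le> B" "v (sum f A) \<le> B" using insert by auto
  then show ?case using ultra[of "f a" "sum f A"] insert.hyps by simp
qed

lemma abs_of_nat_le: "v (of_nat k) \<le> 1"
proof (induction k)
  case 0
  then show ?case by simp
next
  case (Suc k)
  then show ?case using ultra[of 1 "of_nat k"] abs_one by simp
qed

lemma abs_le_one_if_near_one: "v (q - 1) \<le> 1 \<Longrightarrow> v q \<le> 1"
  using ultra[of 1 "q - 1"] abs_one by simp

lemma q_int_abs_le: "v r \<le> 1 \<Longrightarrow> v (q_int r x) \<le> 1"
  unfolding q_int_def by (rule abs_sum_le) (auto simp: abs_power power_le_one nonneg)

lemma euler_partial_sum_abs_le: "v q \<le> 1 \<Longrightarrow> v (euler_partial_sum q n m) \<le> 1"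
  unfolding euler_partial_sum_def using q_int_abs_le nonneg
  by (intro abs_sum_le) (auto simp: mult abs_minus_one abs_power power_le_one)


text \<open>In [p]_{1+t} = sum_j C(p,j+1) t^j all coefficients but the last are divisible by p.\<close>
lemma q_int_prime_abs_le:
  assumes p: "prime p" and vp: "v (of_nat p) = 1 / real p"
    and r: "v (r - 1) \<le> s" and s: "s \<le> 1"
  shows "v (q_int r p) \<le> max (1 / real p) (s ^ (p - 1))"
proof -
  define t where "t = r - 1"
  have vt: "v t \<le> s" "v t \<le> 1" using r s by (auto simp: t_def)
  have p1: "p > 1" using p prime_gt_1_nat by auto
  have term_le: "v (of_nat (p choose Suc j) * t ^ j) \<le> max (1 / real p) (s ^ (p - 1))"
    if j: "j < p" for j
  proof (cases "Suc j = p")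
    case True
    then have "v (of_nat (p choose Suc j) * t ^ j) = v t ^ (p - 1)"
      by (auto simp: mult abs_power abs_one)
    also have "\<dots> \<le> s ^ (p - 1)" using vt nonneg by (simp add: power_mono)
    finally show ?thesis by simp
  next
    case False
    then have "p dvd (p choose Suc j)" using dvd_choose_prime[of "Suc j" p] p j by auto
    then obtain k where k: "p choose Suc j = p * k" by blast
    have "v (of_nat (p choose Suc j) * t ^ j) = 1 / real p * (v (of_nat k) * v t ^ j)"
      by (simp add: k mult abs_power vp)
    also have "\<dots> \<le> 1 / real p * 1"
      using abs_of_nat_le[of k] vt nonneg
      by (intro mult_left_mono) (auto intro!: mult_le_one power_le_one)
    finally show ?thesis by simp
  qed
  have expand: "q_int r p = (\<Sum>j<p. of_nat (p choose Suc j) * t ^ j)"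
    using q_int_binomial[of t p] by (simp add: t_def)
  show ?thesis
    unfolding expand using term_le by (intro abs_sum_le) (simp_all add: max.coboundedI1)
qed

text \<open>Iterating via [p^(N+1)]_q = [p^N]_q [p]_{q^(p^N)}; note |q^(p^N) - 1| <= |q - 1|.\<close>
lemma q_int_prime_power_abs_le:
  assumes p: "prime p" and vp: "v (of_nat p) = 1 / real p"
    and q: "v (q - 1) \<le> s" and s: "s \<le> 1"
  shows "v (q_int q (p ^ N)) \<le> max (1 / real p) (s ^ (p - 1)) ^ N"
proof (induction N)
  case 0
  then show ?case by (simp add: q_int_def abs_one)
next
  case (Suc N)
  define c where "c = max (1 / real p) (s ^ (p - 1))"
  have c0: "0 \<le> c" by (simp add: c_def le_max_iff_disj)
  have vq: "v q \<le> 1" using abs_le_one_if_near_one q s by simp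
  have "q ^ p ^ N - 1 = (q - 1) * q_int q (p ^ N)"
    using one_diff_power_eq[of q "p ^ N"] unfolding q_int_def by (simp add: algebra_simps)
  then have "v (q ^ p ^ N - 1) = v (q - 1) * v (q_int q (p ^ N))"
    by (simp add: mult)
  also have "\<dots> \<le> s * 1"
    using q q_int_abs_le[OF vq] nonneg by (intro mult_mono) (auto intro: order_trans)
  finally have near: "v (q ^ p ^ N - 1) \<le> s" by simp
  have "v (q_int q (p ^ Suc N)) = v (q_int q (p ^ N)) * v (q_int (q ^ p ^ N) p)"
    by (simp add: q_int_mult mult)
  also have "\<dots> \<le> c ^ N * c"
    using Suc q_int_prime_abs_le[OF p vp near s] nonneg c0
    by (intro mult_mono) (auto simp: c_def)
  finally show ?case by (simp add: c_def mult.commute)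
qed


text \<open>[a + bM]_q - [a]_q = q^a [M]_q [b]_{q^M}, so the n-th powers differ by a multiple of [M]_q.\<close>
lemma q_int_power_shift_abs_le:
  assumes vq: "v q \<le> 1"
  shows "v (q_int q (a + b * M) ^ n - q_int q a ^ n) \<le> v (q_int q M)"
proof -
  define X where "X = q_int q (a + b * M)"
  define Y where "Y = q_int q a"
  have "X - Y = q ^ a * (q_int q M * q_int (q ^ M) b)"
    using q_int_mult[of q b M] by (simp add: X_def Y_def q_int_add)
  then have "v (X - Y) = v q ^ a * (v (q_int q M) * v (q_int (q ^ M) b))"
    by (simp add: mult abs_power)
  also have "\<dots> \<le> 1 * (v (q_int q M) * 1)"
    using vq q_int_abs_le[of "q ^ M" b] nonneg
    by (intro mult_mono) (auto simp: abs_power power_le_one)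
  finally have diff: "v (X - Y) \<le> v (q_int q M)" by simp
  have XY: "v X \<le> 1" "v Y \<le> 1" using q_int_abs_le[OF vq] by (auto simp: X_def Y_def)
  have quot: "v (\<Sum>i<n. Y ^ (n - Suc i) * X ^ i) \<le> 1"
    using XY nonneg by (intro abs_sum_le) (auto simp: mult abs_power intro!: mult_le_one power_le_one)
  have "v (X ^ n - Y ^ n) = v (X - Y) * v (\<Sum>i<n. Y ^ (n - Suc i) * X ^ i)"
    by (simp add: mult power_diff_sumr2)
  also have "\<dots> \<le> v (q_int q M) * 1"
    using diff quot nonneg by (intro mult_mono) auto
  finally show ?thesis by (simp add: X_def Y_def)
qed

lemma euler_partial_sum_period_abs_le:
  assumes "odd p" "odd M" and vq: "v q \<le> 1"
  shows "v (euler_partial_sum q n (M * p) - euler_partial_sum q n M) \<le> v (q_int q M)"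
  unfolding euler_partial_sum_period[OF assms(1,2)]
  using q_int_power_shift_abs_le[OF vq] nonneg
  by (intro abs_sum_le) (auto simp: mult abs_sign)

end


section \<open>Complete non-archimedean fields\<close>

locale complete_nonarch_abs = nonarch_abs +
  assumes complete: "\<And>S. (\<forall>e>0. \<exists>M. \<forall>m\<ge>M. \<forall>n\<ge>M. v (S m - S n) < e)
     \<Longrightarrow> \<exists>L. (\<lambda>n. v (S n - L)) \<longlonglongrightarrow> 0"
begin

lemma geometric_increments_converge:
  assumes c: "0 \<le> c" "c < 1" and step: "\<And>N. v (S (Suc N) - S N) \<le> c ^ N"
  shows "\<exists>L. (\<lambda>N. v (S N - L)) \<longlonglongrightarrow> 0"
proof (rule complete, intro allI impI)
  have tail: "v (S m - S k) \<le> c ^ k" if "k \<le> m" for m k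
    using that
  proof (induction m rule: dec_induct)
    case base
    then show ?case using c by simp
  next
    case (step m)
    have "v (S (Suc m) - S k) \<le> max (v (S (Suc m) - S m)) (v (S m - S k))"
      using ultra[of "S (Suc m) - S m" "S m - S k"] by simp
    also have "\<dots> \<le> c ^ k"
      using step.IH assms(3)[of m] power_decreasing[OF step.hyps(1) c(1)] c by auto
    finally show ?case .
  qed
  fix e :: real
  assume "e > 0"
  then obtain K where K: "c ^ K < e" using real_arch_pow_inv c(2) by blast
  have "v (S m - S k) < e" if "K \<le> m" "K \<le> k" for m k
  proof -
    have "v (S m - S k) \<le> c ^ min m k"
      using tail[of k m] tail[of m k] abs_diff_commute[of "S m" "S k"]
      by (cases "k \<le> m") (auto simp: min_def)
    also have "\<dots> \<le> c ^ K" using that c by (intro power_decreasing) auto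
    finally show ?thesis using K by simp
  qed
  then show "\<exists>M. \<forall>m\<ge>M. \<forall>n\<ge>M. v (S m - S n) < e" by blast
qed

text \<open>A uniform positive bound on the terms passes to the limit (the limit is eventually
  closer to the terms than the bound).\<close>
lemma limit_abs_le:
  assumes L: "(\<lambda>N. v (S N - L)) \<longlonglongrightarrow> 0" and bound: "\<And>N. v (S N) \<le> B" and "0 < B"
  shows "v L \<le> B"
proof -
  have "\<forall>\<^sub>F N in sequentially. v (S N - L) < B"
    using order_tendstoD(2)[OF L \<open>0 < B\<close>] .
  then obtain N where N: "v (S N - L) < B" by (meson eventually_sequentially order_refl)
  have "v L = v (S N - (S N - L))" by simp
  also have "\<dots> \<le> max (v (S N)) (v (S N - L))" by (rule abs_diff_le)
  also have "\<dots> \<le> B" using bound[of N] N by simp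
  finally show ?thesis .
qed

end


lemma cp_like_abs_complete_nonarch:
  "cp_like_abs p v \<Longrightarrow> complete_nonarch_abs v"
  unfolding cp_like_abs_def by unfold_locales blast+

theorem corollary3:
  fixes p :: nat and v :: "'a::field_char_0 \<Rightarrow> real" and q :: 'a and n :: nat
  assumes "prime p" and "odd p"
    and "cp_like_abs p v"
    and "v (1 - q) < real p powr (- 1 / (real p - 1))"
  shows "\<exists>L. (\<lambda>N. v ((\<Sum>x<p ^ N. (- 1) ^ x * q_int q x ^ n) - L)) \<longlonglongrightarrow> 0
             \<and> v L \<le> 1"
proof -
  interpret complete_nonarch_abs v using assms(3) by (rule cp_like_abs_complete_nonarch)
  have vp: "v (of_nat p) = 1 / real p" using assms(3) by (simp add: cp_like_abs_def)
  have p1: "p > 1" using assms(1) prime_gt_1_nat by auto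
  define s where "s = v (q - 1)"
  have "real p powr (- 1 / (real p - 1)) \<le> 1"
    using p1 powr_mono[of "- 1 / (real p - 1)" 0 "real p"] by simp
  then have s1: "s < 1" using assms(4) abs_diff_commute[of 1 q] by (simp add: s_def)
  define c where "c = max (1 / real p) (s ^ (p - 1))"
  have "s ^ (p - 1) < 1" using s1 p1 nonneg by (simp add: s_def power_less_one_iff)
  then have c: "0 \<le> c" "c < 1" using p1 by (auto simp: c_def le_max_iff_disj)
  have vq: "v q \<le> 1" using abs_le_one_if_near_one s1 by (simp add: s_def)
  define S where "S = (\<lambda>N. euler_partial_sum q n (p ^ N))"
  have "v (S (Suc N) - S N) \<le> c ^ N" for N
    using euler_partial_sum_period_abs_le[OF assms(2) _ vq, of "p ^ N" n] assms(2)
      q_int_prime_power_abs_le[OF assms(1) vp _ _, of q s N] s1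
    by (simp add: S_def c_def s_def mult.commute)
  then obtain L where L: "(\<lambda>N. v (S N - L)) \<longlonglongrightarrow> 0"
    using geometric_increments_converge[OF c] by blast
  moreover have "v L \<le> 1"
    using limit_abs_le[OF L] euler_partial_sum_abs_le[OF vq] by (simp add: S_def)
  ultimately show ?thesis unfolding S_def euler_partial_sum_def by blast
qed

end
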